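(* Let $\psi\in\mathbb{R}[x]$ be a polynomial of degree $\ge 3$ with homogeneous expansion $\psi=\psi_t+\dots+\psi_m$, where $\psi_t\neq 0$ and $\psi_m\neq 0$. If the constant function $1$ is in the image of the Fischer operator $F_\psi$, then $\psi_m$ is a harmonic divisor.
   Context: $\mathbb{R}[x]$ denotes the real polynomials in $d$ variables, $\Delta$ the Laplacian, and $F_\psi:\mathbb{R}[x]\to\mathbb{R}[x]$, $F_\psi(q)=\Delta(\psi q)$, the Fischer operator. A polynomial $f_j$ is homogeneous of degree $j$ if $f_j(rx)=r^jf_j(x)$ for all $r>0$, $x\in\mathbb{R}^d$; every polynomial of degree $m$ is written uniquely as $f=f_t+\dots+f_m$ with $f_j$ homogeneous of degree $j$, $f_t\ne0$, $f_m\ne 0$. A polynomial $f$ is a harmonic divisor if there exists a non-zero polynomial $q$ such that $fq$ is harmonic. *)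

theory Defs
  imports Complex_Main "HOL-Library.Poly_Mapping"
begin

text \<open>Real polynomials in the variables indexed by a finite type 'n (so d = CARD('n)):
  a polynomial is a finitely supported map from exponent vectors (monomials) to
  real coefficients; multiplication is the library's convolution product.\<close>

type_synonym 'n rpoly = "('n \<Rightarrow>\<^sub>0 nat) \<Rightarrow>\<^sub>0 real"

definition mon_deg :: "('n \<Rightarrow>\<^sub>0 nat) \<Rightarrow> nat" where
  "mon_deg \<alpha> = sum (Poly_Mapping.lookup \<alpha>) (Poly_Mapping.keys \<alpha>)"

definition total_degree :: "'n rpoly \<Rightarrow> nat" where
  "total_degree p = Max (insert 0 (mon_deg ` Poly_Mapping.keys p))"

definition hom_part :: "nat \<Rightarrow> 'n rpoly \<Rightarrow> 'n rpoly" where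
  "hom_part j p = (\<Sum>\<alpha>\<in>{\<alpha>\<in>Poly_Mapping.keys p. mon_deg \<alpha> = j}. Poly_Mapping.single \<alpha> (Poly_Mapping.lookup p \<alpha>))"

definition pdiff :: "'n \<Rightarrow> 'n rpoly \<Rightarrow> 'n rpoly" where
  "pdiff i p = (\<Sum>\<alpha>\<in>Poly_Mapping.keys p.
      Poly_Mapping.single (\<alpha> - Poly_Mapping.single i 1) (of_nat (Poly_Mapping.lookup \<alpha> i) * Poly_Mapping.lookup p \<alpha>))"

definition laplacian :: "'n::finite rpoly \<Rightarrow> 'n rpoly" where
  "laplacian p = (\<Sum>i\<in>UNIV. pdiff i (pdiff i p))"

definition harmonic :: "'n::finite rpoly \<Rightarrow> bool" where
  "harmonic p \<longleftrightarrow> laplacian p = 0"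

definition harmonic_divisor :: "'n::finite rpoly \<Rightarrow> bool" where
  "harmonic_divisor f \<longleftrightarrow> (\<exists>q. q \<noteq> 0 \<and> harmonic (f * q))"

definition fischer :: "'n::finite rpoly \<Rightarrow> 'n rpoly \<Rightarrow> 'n rpoly" where
  "fischer \<psi> q = laplacian (\<psi> * q)"

end

theory Submission
  imports Defs
begin

text \<open>If \<open>\<Delta>(\<psi> q) = 1\<close> with \<open>\<psi>\<^sub>m\<close> and \<open>q\<^sub>k\<close> the top homogeneous parts of \<open>\<psi>\<close> and \<open>q\<close>,
  then \<open>\<psi>\<^sub>m q\<^sub>k\<close> is the top homogeneous part of \<open>\<psi> q\<close>. Since \<open>\<Delta>\<close> lowers degrees by exactly two,
  \<open>\<Delta>(\<psi>\<^sub>m q\<^sub>k)\<close> is the component of degree \<open>m + k - 2 \<ge> 1\<close> of \<open>\<Delta>(\<psi> q) = 1\<close>, hence zero;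
  and \<open>q\<^sub>k \<noteq> 0\<close> because \<open>q \<noteq> 0\<close>.\<close>

lemma mon_deg_eq_sum_UNIV: "mon_deg (\<alpha>::'n::finite \<Rightarrow>\<^sub>0 nat) = (\<Sum>i\<in>UNIV. Poly_Mapping.lookup \<alpha> i)"
  unfolding mon_deg_def by (rule sum.mono_neutral_left) (auto simp: in_keys_iff)

lemma mon_deg_add: "mon_deg ((\<alpha>::'n::finite \<Rightarrow>\<^sub>0 nat) + \<beta>) = mon_deg \<alpha> + mon_deg \<beta>"
  by (simp add: mon_deg_eq_sum_UNIV lookup_add sum.distrib)

lemma mon_deg_single_1 [simp]: "mon_deg (Poly_Mapping.single i (Suc 0)) = 1"
  by (simp add: mon_deg_def)

lemma mon_deg_0 [simp]: "mon_deg (0::'n \<Rightarrow>\<^sub>0 nat) = 0"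
  by (simp add: mon_deg_def)

lemma lookup_hom_part:
  "Poly_Mapping.lookup (hom_part j (p::'n rpoly)) \<alpha> = (if mon_deg \<alpha> = j then Poly_Mapping.lookup p \<alpha> else 0)"
proof -
  let ?K = "{\<alpha>\<in>Poly_Mapping.keys p. mon_deg \<alpha> = j}"
  have "Poly_Mapping.lookup (hom_part j p) \<alpha> = (\<Sum>\<alpha>'\<in>?K. if \<alpha>' = \<alpha> then Poly_Mapping.lookup p \<alpha>' else 0)"
    unfolding hom_part_def lookup_sum lookup_single when_def by (rule sum.cong) auto
  also have "\<dots> = (if \<alpha> \<in> ?K then Poly_Mapping.lookup p \<alpha> else 0)"
    by (rule sum.delta) simp
  finally show ?thesis by (auto simp: in_keys_iff)
qed

lemma hom_part_sum: "hom_part j (sum f S) = (\<Sum>x\<in>S. hom_part j (f x))"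
  by (rule poly_mapping_eqI) (simp add: lookup_hom_part lookup_sum)

lemma hom_part_1: "hom_part j (1::'n rpoly) = (if j = 0 then 1 else 0)"
  by (rule poly_mapping_eqI) (auto simp: lookup_hom_part lookup_one when_def)

lemma minus_single_eq_iff:
  assumes "Poly_Mapping.lookup \<alpha> i \<noteq> 0"
  shows "\<alpha> - Poly_Mapping.single i 1 = \<beta> \<longleftrightarrow> \<alpha> = \<beta> + Poly_Mapping.single i (1::nat)"
proof
  assume "\<alpha> - Poly_Mapping.single i 1 = \<beta>"
  then show "\<alpha> = \<beta> + Poly_Mapping.single i 1"
    using assms by (auto intro!: poly_mapping_eqI simp: lookup_add lookup_minus lookup_single when_def)
qed (auto intro!: poly_mapping_eqI simp: lookup_add lookup_minus)

lemma lookup_pdiff: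
  "Poly_Mapping.lookup (pdiff i p) (\<beta>::'n \<Rightarrow>\<^sub>0 nat) =
     of_nat (Poly_Mapping.lookup \<beta> i + 1) * Poly_Mapping.lookup p (\<beta> + Poly_Mapping.single i 1)"
proof -
  let ?e = "Poly_Mapping.single i (1::nat)"
  let ?c = "\<lambda>\<alpha>. of_nat (Poly_Mapping.lookup \<alpha> i) * Poly_Mapping.lookup p \<alpha>"
  have summand: "(?c \<alpha> when \<alpha> - ?e = \<beta>) = (if \<alpha> = \<beta> + ?e then ?c \<alpha> else 0)" for \<alpha>
  proof (cases "Poly_Mapping.lookup \<alpha> i = 0")
    case True
    then have "\<alpha> \<noteq> \<beta> + ?e" by (auto simp: lookup_add)
    with True show ?thesis by (simp add: when_def)
  next
    case False
    then have "\<alpha> - ?e = \<beta> \<longleftrightarrow> \<alpha> = \<beta> + ?e" by (rule minus_single_eq_iff)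
    then show ?thesis by (simp add: when_def)
  qed
  have "Poly_Mapping.lookup (pdiff i p) \<beta> = (\<Sum>\<alpha>\<in>Poly_Mapping.keys p. if \<alpha> = \<beta> + ?e then ?c \<alpha> else 0)"
    unfolding pdiff_def lookup_sum lookup_single by (rule sum.cong[OF refl summand])
  also have "\<dots> = (if \<beta> + ?e \<in> Poly_Mapping.keys p then ?c (\<beta> + ?e) else 0)"
    by (rule sum.delta) simp
  finally show ?thesis by (auto simp: in_keys_iff lookup_add)
qed

lemma pdiff_hom_part:
  assumes "j \<ge> 1"
  shows "pdiff i (hom_part j p) = hom_part (j - 1) (pdiff i (p::'n::finite rpoly))"
  by (rule poly_mapping_eqI) (use assms in \<open>auto simp: lookup_pdiff lookup_hom_part mon_deg_add\<close>)

lemma laplacian_hom_part: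
  assumes "j \<ge> 2"
  shows "laplacian (hom_part j p) = hom_part (j - 2) (laplacian (p::'n::finite rpoly))"
proof -
  have "pdiff i (pdiff i (hom_part j p)) = hom_part (j - 2) (pdiff i (pdiff i p))" for i
    using assms by (simp add: pdiff_hom_part numeral_2_eq_2)
  then show ?thesis by (simp add: laplacian_def hom_part_sum)
qed

lemma laplacian_0 [simp]: "laplacian (0::'n::finite rpoly) = 0"
  by (rule poly_mapping_eqI) (simp add: laplacian_def lookup_sum lookup_pdiff)

lemma mon_deg_le_total_degree: "\<alpha> \<in> Poly_Mapping.keys p \<Longrightarrow> mon_deg \<alpha> \<le> total_degree p"
  unfolding total_degree_def by (rule Max_ge) auto

lemma lookup_above_total_degree: "mon_deg \<alpha> > total_degree p \<Longrightarrow> Poly_Mapping.lookup p \<alpha> = 0"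
  using mon_deg_le_total_degree[of \<alpha> p] by (auto simp: in_keys_iff)

lemma hom_part_total_degree_neq_0:
  assumes "p \<noteq> 0"
  shows "hom_part (total_degree p) p \<noteq> 0"
proof -
  obtain \<alpha> where \<alpha>: "\<alpha> \<in> Poly_Mapping.keys p"
    using assms by (metis all_not_in_conv keys_eq_empty)
  have "total_degree p \<in> insert 0 (mon_deg ` Poly_Mapping.keys p)"
    unfolding total_degree_def by (rule Max_in) auto
  then obtain \<beta> where "\<beta> \<in> Poly_Mapping.keys p" "mon_deg \<beta> = total_degree p"
    using \<alpha> mon_deg_le_total_degree[OF \<alpha>] by auto
  then have "Poly_Mapping.lookup (hom_part (total_degree p) p) \<beta> \<noteq> 0"
    by (simp add: lookup_hom_part in_keys_iff)
  then show ?thesis by auto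
qed

lemma lookup_mult_cong:
  fixes p q p' q' :: "'n rpoly"
  assumes "\<And>l r. \<gamma> = l + r \<Longrightarrow>
    Poly_Mapping.lookup p l * Poly_Mapping.lookup q r = Poly_Mapping.lookup p' l * Poly_Mapping.lookup q' r"
  shows "Poly_Mapping.lookup (p * q) \<gamma> = Poly_Mapping.lookup (p' * q') \<gamma>"
proof -
  have "Poly_Mapping.lookup p l * (\<Sum>r. (Poly_Mapping.lookup q r when \<gamma> = l + r)) =
        Poly_Mapping.lookup p' l * (\<Sum>r. (Poly_Mapping.lookup q' r when \<gamma> = l + r))" for l
  proof -
    have fin: "finite {r. (Poly_Mapping.lookup g r when \<gamma> = l + r) \<noteq> 0}" for g :: "'n rpoly"
      by (rule finite_subset[OF _ finite_keys[of g]]) (auto simp: in_keys_iff)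
    show ?thesis
      unfolding Sum_any_right_distrib[OF fin] mult_when
      by (rule Sum_any.cong) (simp add: assms when_def)
  qed
  then show ?thesis by (simp add: lookup_mult)
qed

lemma hom_part_mult_total_degree:
  fixes p q :: "'n::finite rpoly"
  defines "m \<equiv> total_degree p" and "k \<equiv> total_degree q"
  shows "hom_part (m + k) (p * q) = hom_part m p * hom_part k q"
proof (rule poly_mapping_eqI)
  fix \<gamma>
  show "Poly_Mapping.lookup (hom_part (m + k) (p * q)) \<gamma> = Poly_Mapping.lookup (hom_part m p * hom_part k q) \<gamma>"
  proof (cases "mon_deg \<gamma> = m + k")
    case True
    have "Poly_Mapping.lookup (p * q) \<gamma> = Poly_Mapping.lookup (hom_part m p * hom_part k q) \<gamma>"
    proof (rule lookup_mult_cong)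
      fix l r assume "\<gamma> = l + r"
      then have "mon_deg l + mon_deg r = m + k"
        using True by (simp add: mon_deg_add)
      moreover have "Poly_Mapping.lookup p l = 0" if "mon_deg l > m"
        using that lookup_above_total_degree m_def by blast
      moreover have "Poly_Mapping.lookup q r = 0" if "mon_deg r > k"
        using that lookup_above_total_degree k_def by blast
      ultimately show "Poly_Mapping.lookup p l * Poly_Mapping.lookup q r =
          Poly_Mapping.lookup (hom_part m p) l * Poly_Mapping.lookup (hom_part k q) r"
        by (cases "mon_deg l" m rule: linorder_cases) (auto simp: lookup_hom_part)
    qed
    with True show ?thesis by (simp add: lookup_hom_part)
  next
    case False
    have "Poly_Mapping.lookup (hom_part m p * hom_part k q) \<gamma> = Poly_Mapping.lookup (0 * 0) \<gamma>"
      by (rule lookup_mult_cong) (use False in \<open>auto simp: lookup_hom_part mon_deg_add\<close>)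
    with False show ?thesis by (simp add: lookup_hom_part)
  qed
qed

theorem mainTheorem2:
  fixes \<psi> :: "('n::finite \<Rightarrow>\<^sub>0 nat) \<Rightarrow>\<^sub>0 real"
  assumes "total_degree \<psi> \<ge> 3"
    and "1 \<in> Set.range (fischer \<psi>)"
  shows "harmonic_divisor (hom_part (total_degree \<psi>) \<psi>)"
proof -
  obtain q where q: "laplacian (\<psi> * q) = 1"
    using assms(2) by (auto simp: fischer_def)
  then have "q \<noteq> 0" by auto
  define m where "m = total_degree \<psi>"
  define k where "k = total_degree q"
  have "laplacian (hom_part m \<psi> * hom_part k q) = laplacian (hom_part (m + k) (\<psi> * q))"
    by (simp add: hom_part_mult_total_degree m_def k_def)
  also have "\<dots> = hom_part (m + k - 2) 1"
    using assms(1) q by (simp add: laplacian_hom_part m_def)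
  also have "\<dots> = 0"
    using assms(1) by (simp add: hom_part_1 m_def)
  finally have "harmonic (hom_part m \<psi> * hom_part k q)"
    by (simp add: harmonic_def)
  moreover have "hom_part k q \<noteq> 0"
    using \<open>q \<noteq> 0\<close> by (simp add: k_def hom_part_total_degree_neq_0)
  ultimately show ?thesis
    unfolding harmonic_divisor_def m_def by blast
qed

end
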